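(* Let $\mathcal H$ be an $n$-vertex linear hypergraph and let $t := e(\mathcal H) - n$. If $e_1,\dots,e_{2t} \in \mathcal H$ are distinct, pairwise intersecting edges such that $\{e_{2i-1},e_{2i}\}$ is a useful pair for each $i\in[t]$, then $\mathcal H$ has a proper edge-colouring with $n$ colours in which each colour is assigned to at most two edges.
   Context: A hypergraph has a finite vertex set and a set of nonempty edges; linear means any two distinct edges share at most one vertex; $e(\mathcal H)$ is the number of edges. For an edge $e$, $N(e)$ denotes the set of edges $f \ne e$ of $\mathcal H$ with $f\cap e\neq\varnothing$. In an $n$-vertex hypergraph, a pair $\{e,f\}\subseteq\mathcal H$ is useful if $e\ne f$, $e\cap f\ne\varnothing$, and $|N(e)\cap N(f)| \le n-2$. A proper edge-colouring assigns colours to edges so that distinct intersecting edges get different colours. *)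

theory Defs
  imports Main
begin

definition hypergraph :: "'a set \<Rightarrow> 'a set set \<Rightarrow> bool" where
  "hypergraph V H \<longleftrightarrow> finite V \<and> (\<forall>e\<in>H. e \<noteq> {} \<and> e \<subseteq> V)"

definition linear_hg :: "'a set set \<Rightarrow> bool" where
  "linear_hg H \<longleftrightarrow> (\<forall>e\<in>H. \<forall>f\<in>H. e \<noteq> f \<longrightarrow> card (e \<inter> f) \<le> 1)"

definition nbhd :: "'a set set \<Rightarrow> 'a set \<Rightarrow> 'a set set" where
  "nbhd H e = {f \<in> H. f \<noteq> e \<and> f \<inter> e \<noteq> {}}"

definition useful_pair :: "'a set \<Rightarrow> 'a set set \<Rightarrow> 'a set \<Rightarrow> 'a set \<Rightarrow> bool" where
  "useful_pair V H e f \<longleftrightarrow> e \<in> H \<and> f \<in> H \<and> e \<noteq> f \<and> e \<inter> f \<noteq> {} \<and>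
     int (card (nbhd H e \<inter> nbhd H f)) \<le> int (card V) - 2"

definition proper_edge_colouring :: "'a set set \<Rightarrow> ('a set \<Rightarrow> 'c) \<Rightarrow> bool" where
  "proper_edge_colouring H c \<longleftrightarrow>
     (\<forall>e\<in>H. \<forall>f\<in>H. e \<noteq> f \<and> e \<inter> f \<noteq> {} \<longrightarrow> c e \<noteq> c f)"

end

theory Submission
  imports Defs
begin

text \<open>Let E be the 2t pairwise intersecting edges. For a useful pair {a, b} in E, every edge
  of H other than a and b either lies outside E and misses a or b, or is a common neighbour of
  a and b; since there are at most n - 2 common neighbours, at least e(H) - n = t edges outside E
  miss a or b. Hall's condition is then trivially met, so greedily we choose for the t pairs
  distinct such edges g_i, each disjoint from a partner x_i in its pair. Giving x_i and g_i a
  common colour and every remaining edge its own colour uses e(H) - t = n colours.\<close>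

lemma hypergraph_finite_edges:
  assumes "hypergraph V H"
  shows "finite H"
proof -
  have "H \<subseteq> Pow V" and "finite V"
    using assms unfolding hypergraph_def by auto
  then show ?thesis by (rule finite_subset[OF _ finite_Pow_iff[THEN iffD2]])
qed

lemma greedy_distinct_representatives:
  assumes "finite I" and "\<forall>i\<in>I. finite (A i) \<and> card I \<le> card (A i)"
  shows "\<exists>g. inj_on g I \<and> (\<forall>i\<in>I. g i \<in> A i)"
  using assms
proof (induction I rule: finite_induct)
  case empty
  then show ?case by simp
next
  case (insert j I)
  then obtain g where g: "inj_on g I" "\<forall>i\<in>I. g i \<in> A i"
    by fastforce
  have "card (g ` I) < card (A j)"
    using insert.prems insert.hyps card_image_le[OF insert.hyps(1), of g] by auto
  then have "\<not> A j \<subseteq> g ` I"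
    using card_mono[OF finite_imageI[OF insert.hyps(1)]] by fastforce
  then obtain y where y: "y \<in> A j" "y \<notin> g ` I"
    by blast
  have "inj_on (g(j := y)) (insert j I)"
    using g(1) y(2) insert.hyps(2) by (auto simp: inj_on_def)
  moreover have "\<forall>i\<in>insert j I. (g(j := y)) i \<in> A i"
    using g(2) y(1) by auto
  ultimately show ?case by blast
qed

lemma card_le_avoiders_plus_common_nbhd:
  assumes "finite H" and "\<forall>f\<in>E. \<forall>f'\<in>E. f \<inter> f' \<noteq> {}" and "a \<in> E" and "b \<in> E"
  shows "card H \<le> card {h \<in> H - E. h \<inter> a = {} \<or> h \<inter> b = {}} + card (nbhd H a \<inter> nbhd H b) + 2"
proof -
  let ?U = "{h \<in> H - E. h \<inter> a = {} \<or> h \<inter> b = {}}"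
  have "H \<subseteq> ?U \<union> (nbhd H a \<inter> nbhd H b) \<union> {a, b}"
    using assms(2-4) by (auto simp: nbhd_def Int_commute)
  then have "card H \<le> card (?U \<union> (nbhd H a \<inter> nbhd H b) \<union> {a, b})"
    using assms(1) by (intro card_mono) (auto simp: nbhd_def)
  also have "\<dots> \<le> card (?U \<union> (nbhd H a \<inter> nbhd H b)) + card {a, b}"
    by (rule card_Un_le)
  also have "\<dots> \<le> card ?U + card (nbhd H a \<inter> nbhd H b) + 2"
    using card_Un_le[of ?U "nbhd H a \<inter> nbhd H b"] card_2_iff'[of "{a, b}"]
    by (cases "a = b") auto
  finally show ?thesis .
qed

lemma useful_pair_many_avoiders:
  assumes "finite H" and "\<forall>f\<in>E. \<forall>f'\<in>E. f \<inter> f' \<noteq> {}" and "a \<in> E" and "b \<in> E"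
    and "useful_pair V H a b"
  shows "card H - card V \<le> card {h \<in> H - E. h \<inter> a = {} \<or> h \<inter> b = {}}"
proof -
  have "card (nbhd H a \<inter> nbhd H b) + 2 \<le> card V"
    using assms(5) unfolding useful_pair_def by linarith
  then show ?thesis
    using card_le_avoiders_plus_common_nbhd[OF assms(1-4)] by linarith
qed

lemma distinct_avoiders_of_useful_pairs:
  assumes "finite H" and "\<forall>f\<in>E. \<forall>f'\<in>E. f \<inter> f' \<noteq> {}" and "finite I"
    and "\<forall>i\<in>I. a i \<in> E \<and> b i \<in> E \<and> useful_pair V H (a i) (b i)"
    and "card I \<le> card H - card V"
  shows "\<exists>g. inj_on g I \<and> (\<forall>i\<in>I. g i \<in> H - E \<and> (g i \<inter> a i = {} \<or> g i \<inter> b i = {}))"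
proof -
  define U where "U i = {h \<in> H - E. h \<inter> a i = {} \<or> h \<inter> b i = {}}" for i
  have "finite (U i) \<and> card I \<le> card (U i)" if "i \<in> I" for i
    using useful_pair_many_avoiders[OF assms(1,2)] assms(1,4,5) that
    by (force simp: U_def)
  then obtain g where "inj_on g I" "\<forall>i\<in>I. g i \<in> U i"
    using greedy_distinct_representatives[OF assms(3)] by blast
  then show ?thesis by (auto simp: U_def)
qed

lemma inj_on_choice_from_consecutive_pairs:
  fixes e x :: "nat \<Rightarrow> 'a"
  assumes "inj_on e {1..2*t}" and "\<forall>i\<in>{1..t}. x i \<in> {e (2*i - 1), e (2*i)}"
  shows "inj_on x {1..t}"
proof (rule inj_onI)
  fix i j assume ij: "i \<in> {1..t}" "j \<in> {1..t}" "x i = x j"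
  \<comment> \<open>The index k of the chosen edge in the i-th pair satisfies (k + 1) div 2 = i.\<close>
  obtain k where k: "k \<in> {2*i - 1, 2*i}" "x i = e k"
    using bspec[OF assms(2) ij(1)] by blast
  obtain l where l: "l \<in> {2*j - 1, 2*j}" "x j = e l"
    using bspec[OF assms(2) ij(2)] by blast
  have "k \<in> {1..2*t}" "l \<in> {1..2*t}"
    using k(1) l(1) ij(1,2) by auto
  then have "k = l"
    using inj_onD[OF assms(1)] k(2) l(2) ij(3) by simp
  then show "i = j"
    using k(1) l(1) ij(1,2) by auto
qed

lemma proper_colouring_renumber:
  fixes \<sigma> :: "'a set \<Rightarrow> 'b"
  assumes "finite H" and "card (\<sigma> ` H) \<le> n" and "proper_edge_colouring H \<sigma>"
    and "\<forall>h. card {f \<in> H. \<sigma> f = h} \<le> 2"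
  shows "\<exists>c :: 'a set \<Rightarrow> nat. (\<forall>f\<in>H. c f < n) \<and> proper_edge_colouring H c \<and>
           (\<forall>k. card {f \<in> H. c f = k} \<le> 2)"
proof -
  obtain b where b: "bij_betw b (\<sigma> ` H) {0..<card (\<sigma> ` H)}"
    using ex_bij_betw_finite_nat assms(1) by blast
  have b_inj: "b (\<sigma> f) = b (\<sigma> f') \<longleftrightarrow> \<sigma> f = \<sigma> f'" if "f \<in> H" "f' \<in> H" for f f'
    using inj_on_eq_iff[OF bij_betw_imp_inj_on[OF b]] that by blast
  have "b (\<sigma> f) < n" if "f \<in> H" for f
    using b that assms(2) bij_betwE by fastforce
  moreover have "proper_edge_colouring H (b \<circ> \<sigma>)"
    using assms(3) b_inj unfolding proper_edge_colouring_def by auto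
  moreover have "card {f \<in> H. (b \<circ> \<sigma>) f = k} \<le> 2" for k
  proof (cases "\<exists>f0\<in>H. b (\<sigma> f0) = k")
    case True
    then obtain f0 where "f0 \<in> H" "b (\<sigma> f0) = k" by blast
    then have "{f \<in> H. (b \<circ> \<sigma>) f = k} = {f \<in> H. \<sigma> f = \<sigma> f0}"
      using b_inj by auto
    then show ?thesis using assms(4) by simp
  next
    case False
    then have "{f \<in> H. (b \<circ> \<sigma>) f = k} = {}" by auto
    then show ?thesis by (metis card.empty zero_le)
  qed
  ultimately show ?thesis
    by (intro exI[of _ "b \<circ> \<sigma>"]) simp
qed

lemma proper_colouring_by_disjoint_pairs:
  assumes "finite H" and "inj_on x I" and "inj_on g I" and "x ` I \<subseteq> H" and "g ` I \<subseteq> H"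
    and "x ` I \<inter> g ` I = {}" and "\<forall>i\<in>I. x i \<inter> g i = {}" and "card H \<le> n + card I"
  shows "\<exists>c :: 'a set \<Rightarrow> nat. (\<forall>f\<in>H. c f < n) \<and> proper_edge_colouring H c \<and>
           (\<forall>k. card {f \<in> H. c f = k} \<le> 2)"
proof -
  \<comment> \<open>Colours are edges: g i gets the colour x i, every other edge its own.\<close>
  define \<sigma> where "\<sigma> f = (if f \<in> g ` I then x (inv_into I g f) else f)" for f
  have \<sigma>_g: "\<sigma> (g i) = x i" if "i \<in> I" for i
    using that assms(3) by (simp add: \<sigma>_def)
  have \<sigma>_other: "\<sigma> f = f" if "f \<notin> g ` I" for f
    using that by (simp add: \<sigma>_def)
  have "\<sigma> f \<in> H - g ` I" if "f \<in> H" for f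
  proof (cases "f \<in> g ` I")
    case True
    then obtain i where "i \<in> I" "f = g i" by blast
    then show ?thesis using \<sigma>_g assms(4,6) by auto
  next
    case False
    then show ?thesis using \<sigma>_other that by simp
  qed
  moreover have "H - g ` I \<subseteq> \<sigma> ` H"
    using \<sigma>_other by (metis DiffE image_eqI subsetI)
  ultimately have "\<sigma> ` H = H - g ` I"
    by blast
  moreover have "card (H - g ` I) = card H - card I"
    using assms(1,3,5) by (simp add: card_Diff_subset finite_subset card_image)
  ultimately have "card (\<sigma> ` H) \<le> n"
    using assms(8) by simp
  have fibre: "\<exists>h'. {f \<in> H. \<sigma> f = h} \<subseteq> {h, h'} \<and> (h' = h \<or> h \<inter> h' = {})" for h
  proof (cases "h \<in> x ` I")
    case True
    then obtain i where i: "i \<in> I" "h = x i" by blast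
    have "f \<in> {h, g i}" if "f \<in> H" "\<sigma> f = h" for f
    proof (cases "f \<in> g ` I")
      case True
      then obtain j where j: "j \<in> I" "f = g j" by blast
      then have "x j = x i" using that(2) i \<sigma>_g by simp
      then have "j = i" using inj_onD[OF assms(2)] j(1) i(1) by blast
      then show ?thesis using j(2) by simp
    next
      case False
      then show ?thesis using that \<sigma>_other by simp
    qed
    then show ?thesis using i assms(7) by blast
  next
    case False
    have "f = h" if "f \<in> H" "\<sigma> f = h" for f
    proof (cases "f \<in> g ` I")
      case True
      then obtain j where "j \<in> I" "f = g j" by blast
      then show ?thesis using that(2) \<sigma>_g \<open>h \<notin> x ` I\<close> by auto
    next
      case False
      then show ?thesis using that(2) \<sigma>_other by simp
    qed
    then show ?thesis by blast
  qed
  have "proper_edge_colouring H \<sigma>"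
    unfolding proper_edge_colouring_def
  proof (intro ballI impI notI)
    fix f f' assume ff': "f \<in> H" "f' \<in> H" "f \<noteq> f' \<and> f \<inter> f' \<noteq> {}" "\<sigma> f = \<sigma> f'"
    obtain h' where h': "{f'' \<in> H. \<sigma> f'' = \<sigma> f} \<subseteq> {\<sigma> f, h'}" "h' = \<sigma> f \<or> \<sigma> f \<inter> h' = {}"
      using fibre[of "\<sigma> f"] by auto
    have "f \<in> {\<sigma> f, h'}" "f' \<in> {\<sigma> f, h'}"
      using h'(1) ff' by auto
    then show False
      using ff'(3) h'(2) by (auto simp: Int_commute)
  qed
  moreover have "card {f \<in> H. \<sigma> f = h} \<le> 2" for h
  proof -
    obtain h' where "{f \<in> H. \<sigma> f = h} \<subseteq> {h, h'}"
      using fibre[of h] by auto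
    then have "card {f \<in> H. \<sigma> f = h} \<le> card {h, h'}"
      by (intro card_mono) auto
    also have "\<dots> \<le> 2"
      by (simp add: card_insert_if)
    finally show ?thesis .
  qed
  ultimately show ?thesis
    using proper_colouring_renumber[OF assms(1) \<open>card (\<sigma> ` H) \<le> n\<close>] by blast
qed

theorem proposition5p3:
  fixes V :: "'a set" and H :: "'a set set" and e :: "nat \<Rightarrow> 'a set"
  assumes "hypergraph V H"
    and "linear_hg H"
    and "\<forall>i\<in>{1..2*(card H - card V)}. e i \<in> H"
    and "inj_on e {1..2*(card H - card V)}"
    and "\<forall>i\<in>{1..2*(card H - card V)}. \<forall>j\<in>{1..2*(card H - card V)}. e i \<inter> e j \<noteq> {}"
    and "\<forall>i\<in>{1..card H - card V}. useful_pair V H (e (2*i - 1)) (e (2*i))"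
  shows "\<exists>c :: 'a set \<Rightarrow> nat. (\<forall>f\<in>H. c f < card V) \<and> proper_edge_colouring H c \<and>
           (\<forall>k. card {f \<in> H. c f = k} \<le> 2)"
proof -
  define t where "t = card H - card V"
  define E where "E = e ` {1..2*t}"
  have fin: "finite H"
    using assms(1) by (rule hypergraph_finite_edges)
  have E_H: "E \<subseteq> H" and E_meet: "\<forall>f\<in>E. \<forall>f'\<in>E. f \<inter> f' \<noteq> {}"
    using assms(3,5) by (auto simp: E_def t_def)
  have pair_E: "e (2*i - 1) \<in> E" "e (2*i) \<in> E" if "i \<in> {1..t}" for i
    using that unfolding E_def by (auto intro!: imageI)
  have pairs: "\<forall>i\<in>{1..t}. e (2*i - 1) \<in> E \<and> e (2*i) \<in> E \<and> useful_pair V H (e (2*i - 1)) (e (2*i))"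
    using pair_E assms(6) by (simp add: t_def)
  obtain g where g: "inj_on g {1..t}"
    "\<forall>i\<in>{1..t}. g i \<in> H - E \<and> (g i \<inter> e (2*i - 1) = {} \<or> g i \<inter> e (2*i) = {})"
    using distinct_avoiders_of_useful_pairs[OF fin E_meet finite_atLeastAtMost pairs]
    by (auto simp: t_def)
  have "\<forall>i\<in>{1..t}. \<exists>y. y \<in> {e (2*i - 1), e (2*i)} \<and> y \<inter> g i = {}"
    using g(2) by (metis inf_commute insertCI)
  from bchoice[OF this]
  obtain x where x: "\<forall>i\<in>{1..t}. x i \<in> {e (2*i - 1), e (2*i)} \<and> x i \<inter> g i = {}"
    by (elim exE)
  have x_E: "x ` {1..t} \<subseteq> E"
    using x pair_E by (auto dest!: bspec)
  show ?thesis
  proof (rule proper_colouring_by_disjoint_pairs[OF fin _ g(1)])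
    show "inj_on x {1..t}"
      using inj_on_choice_from_consecutive_pairs[of e t x] assms(4) x by (simp add: t_def)
    show "x ` {1..t} \<subseteq> H" "g ` {1..t} \<subseteq> H" "x ` {1..t} \<inter> g ` {1..t} = {}"
      using x_E g(2) E_H by auto
    show "\<forall>i\<in>{1..t}. x i \<inter> g i = {}" "card H \<le> card V + card {1..t}"
      using x by (auto simp: t_def)
  qed
qed

end
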